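(* In the setting below (Algorithm 3) with all agents truthful, $$0\le\mathbb E_{D\sim\Pi}\mathbb E_D[L_i],\ \ \sup_{D\in\mathcal F}\mathbb E_D[L_i]\ \le\ \frac14\Big(\frac1{|X_i|+|W_i|}+\frac1{|Z_i|}\Big).$$ Moreover, if for every $k$ the distribution of $\varphi_k(X)$, $X\sim D$, is continuous (atomless) for $\Pi$-almost every $D$ (Bayesian) resp. for every $D\in\mathcal F$ (frequentist), then $$\mathbb E_{D\sim\Pi}\mathbb E_D[L_i]=\sup_{D\in\mathcal F}\mathbb E_D[L_i]=\frac16\Big(\frac1{|X_i|+|W_i|}+\frac1{|Z_i|}\Big).$$
   Context: Setting (Algorithm 3, truthful agents). Fix $m\ge2$ agents, a measurable data space $\mathcal X$, measurable feature maps $\varphi_1,\dots,\varphi_K:\mathcal X\to\mathbb R$, and $s:\mathbb N\to\mathbb N$ with $s(n)<n-1$. Conditionally on a distribution $D$ on $\mathcal X$, agent $i$ holds $X_i=(X_{i,1},\dots,X_{i,n_i})$, $n_i\ge1$, i.i.d. from $D$, independent across agents, and submits it. $\varphi_k(S)=\{\varphi_k(x):x\in S\}$; for a finite nonempty multiset $S\subset\mathbb R$, $F_S(t)=\frac1{|S|}\sum_{s\in S}\mathbf 1\{s\le t\}$. Mechanism: $X_{-i}=\bigcup_{j\ne i}X_j$ is split uniformly at random as $\{T_i\}\cup W_i\cup Z_i$ with $|W_i|=s(|X_{-i}|)$, and $L_i=\frac1K\sum_{k=1}^K\big(F_{\varphi_k(X_i\cup W_i)}(\varphi_k(T_i))-F_{\varphi_k(Z_i)}(\varphi_k(T_i))\big)^2$.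 $\mathbb E_D$ is expectation over data i.i.d. from $D$ and mechanism randomness; $\Pi$ is a prior over distributions on $\mathcal X$ (Bayesian) and $\mathcal F$ a class of distributions on $\mathcal X$ (frequentist). *)

theory Defs
  imports "HOL-Probability.Probability"
begin

definition ecdf :: "'i set \<Rightarrow> ('i \<Rightarrow> real) \<Rightarrow> real \<Rightarrow> real" where
  "ecdf S g x = (\<Sum>a\<in>S. if g a \<le> x then 1 else 0) / real (card S)"

text \<open>Data points are indexed by pairs (j, l): agent j < m, sample number l < n j.\<close>
definition data_index :: "nat \<Rightarrow> (nat \<Rightarrow> nat) \<Rightarrow> (nat \<times> nat) set" where
  "data_index m n = {(j, l). j < m \<and> l < n j}"

definition own_index :: "(nat \<Rightarrow> nat) \<Rightarrow> nat \<Rightarrow> (nat \<times> nat) set" where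
  "own_index n i = {(j, l). j = i \<and> l < n i}"

definition others_index :: "nat \<Rightarrow> (nat \<Rightarrow> nat) \<Rightarrow> nat \<Rightarrow> (nat \<times> nat) set" where
  "others_index m n i = {(j, l). j < m \<and> j \<noteq> i \<and> l < n j}"

text \<open>Possible splits of the index set O of X_{-i} into {T}, W (of size w) and Z = O - {T} - W.\<close>
definition splits :: "(nat \<times> nat) set \<Rightarrow> nat \<Rightarrow> ((nat \<times> nat) \<times> (nat \<times> nat) set) set" where
  "splits Ob w = {(t, W). t \<in> Ob \<and> W \<subseteq> Ob - {t} \<and> card W = w}"

definition loss :: "nat \<Rightarrow> (nat \<Rightarrow> 'a \<Rightarrow> real) \<Rightarrow> nat \<Rightarrow> (nat \<Rightarrow> nat) \<Rightarrow> nat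
    \<Rightarrow> ((nat \<times> nat) \<Rightarrow> 'a) \<Rightarrow> ((nat \<times> nat) \<times> (nat \<times> nat) set) \<Rightarrow> real" where
  "loss K \<phi> m n i \<omega> tw = (case tw of (t, W) \<Rightarrow>
     (1 / real K) * (\<Sum>k<K.
        (ecdf (own_index n i \<union> W) (\<lambda>a. \<phi> k (\<omega> a)) (\<phi> k (\<omega> t))
         - ecdf (others_index m n i - {t} - W) (\<lambda>a. \<phi> k (\<omega> a)) (\<phi> k (\<omega> t)))\<^sup>2))"

text \<open>E_D[L_i]: data of all agents i.i.d. from D, split chosen uniformly at random.\<close>
definition expected_loss :: "'a measure \<Rightarrow> nat \<Rightarrow> (nat \<Rightarrow> 'a \<Rightarrow> real) \<Rightarrow> nat
    \<Rightarrow> (nat \<Rightarrow> nat) \<Rightarrow> (nat \<Rightarrow> nat) \<Rightarrow> nat \<Rightarrow> real" where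
  "expected_loss D K \<phi> m n s i =
     (let Ob = others_index m n i; S = splits Ob (s (card Ob)) in
      \<integral>\<omega>. (\<Sum>tw\<in>S. loss K \<phi> m n i \<omega> tw) / real (card S) \<partial>(PiM (data_index m n) (\<lambda>_. D)))"

definition atomless_features :: "'a measure \<Rightarrow> nat \<Rightarrow> (nat \<Rightarrow> 'a \<Rightarrow> real) \<Rightarrow> bool" where
  "atomless_features D K \<phi> = (\<forall>k<K. \<forall>x. measure (distr D borel (\<phi> k)) {x} = 0)"

end

theory Submission
  imports Defs
begin

text \<open>
  Fix a feature \<open>\<psi>\<close> and let \<open>G z = P(\<psi> Y \<le> \<psi> z)\<close> for \<open>Y \<sim> D\<close>. Given the test point \<open>T\<close>,
  the indicators \<open>1{\<psi> X \<le> \<psi> T}\<close> of the remaining data points are i.i.d. with mean \<open>G T\<close>;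
  hence the product of two of them has expectation \<open>E[G]\<close> if they coincide and \<open>E[G\<^sup>2]\<close>
  otherwise. The weights of \<open>F\<^sub>A - F\<^sub>B\<close> sum to zero, so the \<open>E[G\<^sup>2]\<close> part cancels and the
  squared difference has expectation \<open>E[G (1 - G)] (1/|A| + 1/|B|)\<close>, with
  \<open>0 \<le> E[G (1 - G)] \<le> 1/4\<close>. If the law of \<open>\<psi>\<close> is atomless, ties have probability zero:
  among two i.i.d. samples exactly one is the smaller, giving \<open>E[G] = 1/2\<close>, and among three
  exactly one is the largest, giving \<open>E[G\<^sup>2] = 1/3\<close>; so \<open>E[G (1 - G)] = 1/6\<close>. These bounds
  pass to the prior average and to the supremum over the class.
\<close>

section \<open>Coordinates of an i.i.d. family\<close>

lemma (in product_prob_space) nn_integral_PiM_restrict: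
  assumes "J \<subseteq> K" "finite K" and [measurable]: "g \<in> borel_measurable (PiM J M)"
  shows "(\<integral>\<^sup>+\<omega>. g (restrict \<omega> J) \<partial>PiM K M) = (\<integral>\<^sup>+\<omega>. g \<omega> \<partial>PiM J M)"
  by (subst distr_restrict[OF assms(1,2)])
    (simp add: nn_integral_distr measurable_restrict_subset[OF assms(1)])

lemma nn_integral_PiM_two_coordinates:
  fixes f :: "'a \<Rightarrow> 'a \<Rightarrow> ennreal"
  assumes "prob_space D" "finite I" "j0 \<in> I" "j1 \<in> I" "j0 \<noteq> j1"
    and [measurable]: "case_prod f \<in> borel_measurable (D \<Otimes>\<^sub>M D)"
  shows "(\<integral>\<^sup>+\<omega>. f (\<omega> j0) (\<omega> j1) \<partial>PiM I (\<lambda>_. D)) = (\<integral>\<^sup>+y. \<integral>\<^sup>+x. f x y \<partial>D \<partial>D)"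
proof -
  interpret product_prob_space "\<lambda>_. D"
    using assms(1) by (simp add: product_prob_space_def product_prob_space_axioms_def
        product_sigma_finite_def prob_space_imp_sigma_finite)
  interpret prob_space D by fact
  have "(\<integral>\<^sup>+\<omega>. f (\<omega> j0) (\<omega> j1) \<partial>PiM I (\<lambda>_. D))
      = (\<integral>\<^sup>+\<omega>. f (\<omega> j0) (\<omega> j1) \<partial>PiM {j0, j1} (\<lambda>_. D))"
    using assms nn_integral_PiM_restrict[where J = "{j0, j1}" and K = I
        and g = "\<lambda>\<omega>. f (\<omega> j0) (\<omega> j1)"]
    by simp
  also have "\<dots> = (\<integral>\<^sup>+\<omega>. \<integral>\<^sup>+x. f x (\<omega> j1) \<partial>D \<partial>PiM {j1} (\<lambda>_. D))"
    using assms by (subst product_nn_integral_insert) auto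
  also have "\<dots> = (\<integral>\<^sup>+y. \<integral>\<^sup>+x. f x y \<partial>D \<partial>D)"
    by (rule product_nn_integral_singleton) measurable
  finally show ?thesis .
qed

lemma nn_integral_PiM_three_coordinates:
  fixes f :: "'a \<Rightarrow> 'a \<Rightarrow> 'a \<Rightarrow> ennreal"
  assumes "prob_space D" "finite I" "j0 \<in> I" "j1 \<in> I" "j2 \<in> I"
    and "j0 \<noteq> j1" "j0 \<noteq> j2" "j1 \<noteq> j2"
    and [measurable]: "(\<lambda>(x, y, z). f x y z) \<in> borel_measurable (D \<Otimes>\<^sub>M D \<Otimes>\<^sub>M D)"
  shows "(\<integral>\<^sup>+\<omega>. f (\<omega> j0) (\<omega> j1) (\<omega> j2) \<partial>PiM I (\<lambda>_. D))
    = (\<integral>\<^sup>+z. \<integral>\<^sup>+y. \<integral>\<^sup>+x. f x y z \<partial>D \<partial>D \<partial>D)"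
proof -
  interpret product_prob_space "\<lambda>_. D"
    using assms(1) by (simp add: product_prob_space_def product_prob_space_axioms_def
        product_sigma_finite_def prob_space_imp_sigma_finite)
  interpret prob_space D by fact
  have [measurable (raw)]: "(\<lambda>x. f (a x) (b x) (c x)) \<in> borel_measurable N"
    if "a \<in> N \<rightarrow>\<^sub>M D" "b \<in> N \<rightarrow>\<^sub>M D" "c \<in> N \<rightarrow>\<^sub>M D" for N a b c
    using measurable_comp[OF _ assms(9), of "\<lambda>x. (a x, b x, c x)"] that by (simp add: comp_def)
  have "(\<integral>\<^sup>+\<omega>. f (\<omega> j0) (\<omega> j1) (\<omega> j2) \<partial>PiM I (\<lambda>_. D))
      = (\<integral>\<^sup>+\<omega>. f (\<omega> j0) (\<omega> j1) (\<omega> j2) \<partial>PiM {j0, j1, j2} (\<lambda>_. D))"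
    using assms nn_integral_PiM_restrict[where J = "{j0, j1, j2}" and K = I
        and g = "\<lambda>\<omega>. f (\<omega> j0) (\<omega> j1) (\<omega> j2)"]
    by simp
  also have "\<dots> = (\<integral>\<^sup>+\<omega>. \<integral>\<^sup>+x. f x (\<omega> j1) (\<omega> j2) \<partial>D \<partial>PiM {j1, j2} (\<lambda>_. D))"
    using assms by (subst product_nn_integral_insert) auto
  also have "\<dots> = (\<integral>\<^sup>+\<omega>. \<integral>\<^sup>+y. \<integral>\<^sup>+x. f x y (\<omega> j2) \<partial>D \<partial>D \<partial>PiM {j2} (\<lambda>_. D))"
    using assms by (subst product_nn_integral_insert) auto
  also have "\<dots> = (\<integral>\<^sup>+z. \<integral>\<^sup>+y. \<integral>\<^sup>+x. f x y z \<partial>D \<partial>D \<partial>D)"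
    by (rule product_nn_integral_singleton) measurable
  finally show ?thesis .
qed

text \<open>The measurability prover fails on comparisons of two coordinates but handles their difference.\<close>

lemma pred_PiM_coordinates_le[measurable (raw)]:
  fixes \<psi> :: "'a \<Rightarrow> real"
  assumes [measurable]: "\<psi> \<in> borel_measurable D" "j \<in> I" "k \<in> I"
  shows "Measurable.pred (PiM I (\<lambda>_. D)) (\<lambda>\<omega>. \<psi> (\<omega> j) \<le> \<psi> (\<omega> k))"
proof -
  have "Measurable.pred (PiM I (\<lambda>_. D)) (\<lambda>\<omega>. \<psi> (\<omega> j) - \<psi> (\<omega> k) \<le> 0)"
    by measurable
  then show ?thesis
    by simp
qed

lemma pred_PiM_coordinates_eq[measurable (raw)]:
  fixes \<psi> :: "'a \<Rightarrow> real"
  assumes [measurable]: "\<psi> \<in> borel_measurable D" "j \<in> I" "k \<in> I"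
  shows "Measurable.pred (PiM I (\<lambda>_. D)) (\<lambda>\<omega>. \<psi> (\<omega> j) = \<psi> (\<omega> k))"
proof -
  have "Measurable.pred (PiM I (\<lambda>_. D)) (\<lambda>\<omega>. \<psi> (\<omega> j) - \<psi> (\<omega> k) = 0)"
    by measurable
  then show ?thesis
    by simp
qed

section \<open>The distribution function of a feature at an independent sample\<close>

definition cdf_at :: "'a measure \<Rightarrow> ('a \<Rightarrow> real) \<Rightarrow> 'a \<Rightarrow> ennreal" where
  "cdf_at D \<psi> z = (\<integral>\<^sup>+y. of_bool (\<psi> y \<le> \<psi> z) \<partial>D)"

definition cdf_mean :: "'a measure \<Rightarrow> ('a \<Rightarrow> real) \<Rightarrow> ennreal" where
  "cdf_mean D \<psi> = (\<integral>\<^sup>+z. cdf_at D \<psi> z \<partial>D)"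

definition cdf_sq_mean :: "'a measure \<Rightarrow> ('a \<Rightarrow> real) \<Rightarrow> ennreal" where
  "cdf_sq_mean D \<psi> = (\<integral>\<^sup>+z. (cdf_at D \<psi> z)\<^sup>2 \<partial>D)"

lemma cdf_at_le_1: "prob_space D \<Longrightarrow> cdf_at D \<psi> z \<le> 1"
  using nn_integral_mono[of D "\<lambda>y. of_bool (\<psi> y \<le> \<psi> z)" "\<lambda>_. 1"]
  by (simp add: cdf_at_def prob_space.emeasure_space_1)

lemma cdf_mean_le_1: "prob_space D \<Longrightarrow> cdf_mean D \<psi> \<le> 1"
  using nn_integral_mono[of D "cdf_at D \<psi>" "\<lambda>_. 1"]
  by (simp add: cdf_mean_def cdf_at_le_1 prob_space.emeasure_space_1)

lemma cdf_sq_mean_le_1: "prob_space D \<Longrightarrow> cdf_sq_mean D \<psi> \<le> 1"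
  using nn_integral_mono[of D "\<lambda>z. (cdf_at D \<psi> z)\<^sup>2" "\<lambda>_. 1"]
  by (simp add: cdf_sq_mean_def cdf_at_le_1 power_le_one prob_space.emeasure_space_1)

lemma borel_measurable_cdf_at[measurable]:
  assumes "prob_space D" and [measurable]: "\<psi> \<in> borel_measurable D"
  shows "cdf_at D \<psi> \<in> borel_measurable D"
proof -
  interpret prob_space D by fact
  show ?thesis
    unfolding cdf_at_def by measurable
qed

lemma nn_integral_PiM_le:
  assumes "prob_space D" and [measurable]: "\<psi> \<in> borel_measurable D"
    and "finite I" "x \<in> I" "t \<in> I" "x \<noteq> t"
  shows "(\<integral>\<^sup>+\<omega>. of_bool (\<psi> (\<omega> x) \<le> \<psi> (\<omega> t)) \<partial>PiM I (\<lambda>_. D)) = cdf_mean D \<psi>"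
  unfolding cdf_mean_def cdf_at_def
  by (rule nn_integral_PiM_two_coordinates) (use assms in auto)

lemma nn_integral_PiM_le_le:
  assumes "prob_space D" and [measurable]: "\<psi> \<in> borel_measurable D"
    and "finite I" "x \<in> I" "y \<in> I" "t \<in> I" "x \<noteq> y" "x \<noteq> t" "y \<noteq> t"
  shows "(\<integral>\<^sup>+\<omega>. of_bool (\<psi> (\<omega> x) \<le> \<psi> (\<omega> t)) * of_bool (\<psi> (\<omega> y) \<le> \<psi> (\<omega> t)) \<partial>PiM I (\<lambda>_. D))
    = cdf_sq_mean D \<psi>"
proof -
  interpret prob_space D by fact
  have "(\<integral>\<^sup>+\<omega>. of_bool (\<psi> (\<omega> x) \<le> \<psi> (\<omega> t)) * of_bool (\<psi> (\<omega> y) \<le> \<psi> (\<omega> t)) \<partial>PiM I (\<lambda>_. D))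
      = (\<integral>\<^sup>+c. \<integral>\<^sup>+b. \<integral>\<^sup>+a. of_bool (\<psi> a \<le> \<psi> c) * of_bool (\<psi> b \<le> \<psi> c) \<partial>D \<partial>D \<partial>D)"
    by (rule nn_integral_PiM_three_coordinates) (use assms in auto)
  also have "\<dots> = (\<integral>\<^sup>+c. \<integral>\<^sup>+b. cdf_at D \<psi> c * of_bool (\<psi> b \<le> \<psi> c) \<partial>D \<partial>D)"
    unfolding cdf_at_def by (intro nn_integral_cong nn_integral_multc) measurable
  also have "\<dots> = cdf_sq_mean D \<psi>"
    unfolding cdf_sq_mean_def power2_eq_square cdf_at_def
    by (intro nn_integral_cong nn_integral_cmult) measurable
  finally show ?thesis .
qed

lemma nn_integral_level_set_eq_0:
  fixes \<psi> :: "'a \<Rightarrow> real"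
  assumes "prob_space D" and [measurable]: "\<psi> \<in> borel_measurable D"
    and "\<forall>v. measure (distr D borel \<psi>) {v} = 0"
  shows "(\<integral>\<^sup>+y. of_bool (\<psi> y = v) \<partial>D) = 0"
proof -
  interpret prob_space D by fact
  have "(\<integral>\<^sup>+y. of_bool (\<psi> y = v) \<partial>D) = (\<integral>\<^sup>+y. indicator {y \<in> space D. \<psi> y = v} y \<partial>D)"
    by (rule nn_integral_cong) (simp add: indicator_def)
  also have "\<dots> = emeasure D {y \<in> space D. \<psi> y = v}"
    by (rule nn_integral_indicator) measurable
  also have "\<dots> = measure (distr D borel \<psi>) {v}"
    by (simp add: emeasure_eq_measure measure_distr vimage_def Int_def conj_commute)
  finally show ?thesis
    using assms(3) by simp
qed

lemma AE_PiM_no_tie: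
  fixes \<psi> :: "'a \<Rightarrow> real"
  assumes "prob_space D" and [measurable]: "\<psi> \<in> borel_measurable D"
    and "\<forall>v. measure (distr D borel \<psi>) {v} = 0"
    and "finite I" "x \<in> I" "t \<in> I" "x \<noteq> t"
  shows "AE \<omega> in PiM I (\<lambda>_. D). \<psi> (\<omega> x) \<noteq> \<psi> (\<omega> t)"
proof -
  have "(\<integral>\<^sup>+\<omega>. of_bool (\<psi> (\<omega> x) = \<psi> (\<omega> t)) \<partial>PiM I (\<lambda>_. D))
      = (\<integral>\<^sup>+c. \<integral>\<^sup>+a. of_bool (\<psi> a = \<psi> c) \<partial>D \<partial>D)"
    by (rule nn_integral_PiM_two_coordinates[OF assms(1,4-7)]) measurable
  also have "\<dots> = 0"
    using nn_integral_level_set_eq_0[OF assms(1-3)] by simp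
  finally show ?thesis
    using assms(5,6) by (subst (asm) nn_integral_0_iff_AE) auto
qed

lemma enn2real_eq_if_of_nat_mult_eq_1:
  assumes "of_nat n * x = (1 :: ennreal)"
  shows "enn2real x = 1 / real n"
proof -
  have "n \<noteq> 0"
    using assms by (metis mult_zero_left of_nat_0 zero_neq_one)
  moreover have "x \<noteq> \<top>"
    using assms \<open>n \<noteq> 0\<close> by (auto simp: ennreal_mult_top)
  ultimately have "real n * enn2real x = 1"
    using arg_cong[OF assms, of enn2real] by (simp add: enn2real_mult)
  with \<open>n \<noteq> 0\<close> show ?thesis
    by (simp add: field_simps)
qed

lemma cdf_mean_atomless:
  fixes \<psi> :: "'a \<Rightarrow> real"
  assumes "prob_space D" and [measurable]: "\<psi> \<in> borel_measurable D"
    and "\<forall>v. measure (distr D borel \<psi>) {v} = 0"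
  shows "enn2real (cdf_mean D \<psi>) = 1 / 2"
proof -
  let ?P = "PiM {0, 1 :: nat} (\<lambda>_. D)"
  interpret P: prob_space ?P
    using assms(1) by (simp add: prob_space_PiM)
  have "of_nat 2 * cdf_mean D \<psi>
      = (\<integral>\<^sup>+\<omega>. of_bool (\<psi> (\<omega> 0) \<le> \<psi> (\<omega> 1)) \<partial>?P) + (\<integral>\<^sup>+\<omega>. of_bool (\<psi> (\<omega> 1) \<le> \<psi> (\<omega> 0)) \<partial>?P)"
    using nn_integral_PiM_le[OF assms(1,2), of "{0, 1 :: nat}" 0 1]
      nn_integral_PiM_le[OF assms(1,2), of "{0, 1 :: nat}" 1 0]
    by (simp add: mult_2)
  also have "\<dots> = (\<integral>\<^sup>+\<omega>. of_bool (\<psi> (\<omega> 0) \<le> \<psi> (\<omega> 1)) + of_bool (\<psi> (\<omega> 1) \<le> \<psi> (\<omega> 0)) \<partial>?P)"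
    by (rule nn_integral_add[symmetric]) measurable
  also have "\<dots> = (\<integral>\<^sup>+\<omega>. 1 \<partial>?P)"
    using AE_PiM_no_tie[OF assms, of "{0, 1 :: nat}" 0 1]
    by (intro nn_integral_cong_AE) (auto elim!: AE_mp)
  finally have "of_nat 2 * cdf_mean D \<psi> = 1"
    using P.emeasure_space_1 by simp
  from enn2real_eq_if_of_nat_mult_eq_1[OF this] show ?thesis
    by simp
qed

lemma three_distinct_max_indicators:
  fixes a b c :: real
  assumes "a \<noteq> b" "a \<noteq> c" "b \<noteq> c"
  shows "of_bool (b \<le> a) * of_bool (c \<le> a) + of_bool (a \<le> b) * of_bool (c \<le> b)
      + of_bool (a \<le> c) * of_bool (b \<le> c) = (1 :: ennreal)"
  using assms by (cases "b \<le> a"; cases "c \<le> a"; cases "c \<le> b") auto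

lemma cdf_sq_mean_atomless:
  fixes \<psi> :: "'a \<Rightarrow> real"
  assumes "prob_space D" and [measurable]: "\<psi> \<in> borel_measurable D"
    and "\<forall>v. measure (distr D borel \<psi>) {v} = 0"
  shows "enn2real (cdf_sq_mean D \<psi>) = 1 / 3"
proof -
  let ?P = "PiM {0, 1, 2 :: nat} (\<lambda>_. D)"
  let ?max = "\<lambda>\<omega> i j k. of_bool (\<psi> (\<omega> j) \<le> \<psi> (\<omega> i)) * of_bool (\<psi> (\<omega> k) \<le> \<psi> (\<omega> i)) :: ennreal"
  interpret P: prob_space ?P
    using assms(1) by (simp add: prob_space_PiM)
  have sq_mean: "(\<integral>\<^sup>+\<omega>. ?max \<omega> i j k \<partial>?P) = cdf_sq_mean D \<psi>"
    if "i \<in> {0, 1, 2}" "j \<in> {0, 1, 2}" "k \<in> {0, 1, 2}" "i \<noteq> j" "i \<noteq> k" "j \<noteq> k" for i j k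
    using nn_integral_PiM_le_le[OF assms(1,2), of "{0, 1, 2 :: nat}" j k i] that by simp
  have "of_nat 3 * cdf_sq_mean D \<psi> = cdf_sq_mean D \<psi> + cdf_sq_mean D \<psi> + cdf_sq_mean D \<psi>"
    by (simp only: numeral_3_eq_3 of_nat_Suc of_nat_0 add_0_right distrib_right mult_1_left add.assoc)
  also have "\<dots>
      = (\<integral>\<^sup>+\<omega>. ?max \<omega> 0 1 2 \<partial>?P) + (\<integral>\<^sup>+\<omega>. ?max \<omega> 1 0 2 \<partial>?P) + (\<integral>\<^sup>+\<omega>. ?max \<omega> 2 0 1 \<partial>?P)"
    using sq_mean[of 0 1 2] sq_mean[of 1 0 2] sq_mean[of 2 0 1] by simp
  also have "\<dots> = (\<integral>\<^sup>+\<omega>. ?max \<omega> 0 1 2 + ?max \<omega> 1 0 2 + ?max \<omega> 2 0 1 \<partial>?P)"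
    by (simp add: nn_integral_add)
  also have "\<dots> = (\<integral>\<^sup>+\<omega>. 1 \<partial>?P)"
  proof (rule nn_integral_cong_AE)
    have "AE \<omega> in ?P. \<psi> (\<omega> 0) \<noteq> \<psi> (\<omega> 1) \<and> \<psi> (\<omega> 0) \<noteq> \<psi> (\<omega> 2) \<and> \<psi> (\<omega> 1) \<noteq> \<psi> (\<omega> 2)"
      using AE_PiM_no_tie[OF assms, of "{0, 1, 2 :: nat}"] by (simp add: AE_conj_iff)
    then show "AE \<omega> in ?P. ?max \<omega> 0 1 2 + ?max \<omega> 1 0 2 + ?max \<omega> 2 0 1 = 1"
      by eventually_elim (rule three_distinct_max_indicators; simp)
  qed
  finally have "of_nat 3 * cdf_sq_mean D \<psi> = 1"
    using P.emeasure_space_1 by simp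
  from enn2real_eq_if_of_nat_mult_eq_1[OF this] show ?thesis
    by simp
qed

lemma has_bochner_integral_PiM_le_le:
  assumes "prob_space D" and [measurable]: "\<psi> \<in> borel_measurable D"
    and "finite I" "t \<in> I" "x \<in> I - {t}" "y \<in> I - {t}"
  shows "has_bochner_integral (PiM I (\<lambda>_. D))
    (\<lambda>\<omega>. of_bool (\<psi> (\<omega> x) \<le> \<psi> (\<omega> t)) * of_bool (\<psi> (\<omega> y) \<le> \<psi> (\<omega> t)))
    (if x = y then enn2real (cdf_mean D \<psi>) else enn2real (cdf_sq_mean D \<psi>))"
proof (rule has_bochner_integral_nn_integral)
  have [measurable]: "x \<in> I" "y \<in> I" "t \<in> I"
    using assms(4-6) by auto
  show "(\<lambda>\<omega>. of_bool (\<psi> (\<omega> x) \<le> \<psi> (\<omega> t)) * of_bool (\<psi> (\<omega> y) \<le> \<psi> (\<omega> t)) :: real)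
      \<in> borel_measurable (PiM I (\<lambda>_. D))"
    by measurable
  have "(\<integral>\<^sup>+\<omega>. ennreal (of_bool (\<psi> (\<omega> x) \<le> \<psi> (\<omega> t)) * of_bool (\<psi> (\<omega> y) \<le> \<psi> (\<omega> t))) \<partial>PiM I (\<lambda>_. D))
      = (\<integral>\<^sup>+\<omega>. of_bool (\<psi> (\<omega> x) \<le> \<psi> (\<omega> t)) * of_bool (\<psi> (\<omega> y) \<le> \<psi> (\<omega> t)) \<partial>PiM I (\<lambda>_. D))"
    by (intro nn_integral_cong) simp
  also have "\<dots> = (if x = y then cdf_mean D \<psi> else cdf_sq_mean D \<psi>)"
    using nn_integral_PiM_le[OF assms(1-3)] nn_integral_PiM_le_le[OF assms(1-3)] assms(4-6)
    by (cases "x = y") (auto simp flip: of_bool_conj)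
  also have "\<dots> = ennreal (if x = y then enn2real (cdf_mean D \<psi>) else enn2real (cdf_sq_mean D \<psi>))"
    using cdf_mean_le_1[OF assms(1), of \<psi>] cdf_sq_mean_le_1[OF assms(1), of \<psi>]
    by (auto simp: ennreal_enn2real_if top_unique)
  finally show "(\<integral>\<^sup>+\<omega>. ennreal (of_bool (\<psi> (\<omega> x) \<le> \<psi> (\<omega> t)) * of_bool (\<psi> (\<omega> y) \<le> \<psi> (\<omega> t))) \<partial>PiM I (\<lambda>_. D))
      = ennreal (if x = y then enn2real (cdf_mean D \<psi>) else enn2real (cdf_sq_mean D \<psi>))" .
qed auto

lemma has_bochner_integral_square_sum:
  fixes X :: "'i \<Rightarrow> 'b \<Rightarrow> real"
  assumes "finite C"
    and "\<And>x y. x \<in> C \<Longrightarrow> y \<in> C \<Longrightarrow> has_bochner_integral M (\<lambda>\<omega>. X x \<omega> * X y \<omega>) (if x = y then a else b)"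
  shows "has_bochner_integral M (\<lambda>\<omega>. (\<Sum>x\<in>C. c x * X x \<omega>)\<^sup>2)
    (b * (\<Sum>x\<in>C. c x)\<^sup>2 + (a - b) * (\<Sum>x\<in>C. (c x)\<^sup>2))"
proof -
  have integral: "has_bochner_integral M (\<lambda>\<omega>. \<Sum>x\<in>C. \<Sum>y\<in>C. c x * c y * (X x \<omega> * X y \<omega>))
      (\<Sum>x\<in>C. \<Sum>y\<in>C. c x * c y * (if x = y then a else b))"
    using assms(2) by (intro has_bochner_integral_sum has_bochner_integral_mult_right) auto
  have square: "(\<lambda>\<omega>. \<Sum>x\<in>C. \<Sum>y\<in>C. c x * c y * (X x \<omega> * X y \<omega>)) = (\<lambda>\<omega>. (\<Sum>x\<in>C. c x * X x \<omega>)\<^sup>2)"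
    by (simp add: power2_eq_square sum_product algebra_simps)
  have "(\<Sum>x\<in>C. \<Sum>y\<in>C. c x * c y * (if x = y then a else b))
      = (\<Sum>x\<in>C. \<Sum>y\<in>C. b * (c x * c y)) + (\<Sum>x\<in>C. \<Sum>y\<in>C. if x = y then (a - b) * (c x * c y) else 0)"
    by (simp add: sum.distrib[symmetric]) (intro sum.cong refl; simp add: algebra_simps)
  also have "(\<Sum>x\<in>C. \<Sum>y\<in>C. b * (c x * c y)) = b * (\<Sum>x\<in>C. c x)\<^sup>2"
    by (simp only: power2_eq_square sum_product) (simp add: sum_distrib_left)
  also have "(\<Sum>x\<in>C. \<Sum>y\<in>C. if x = y then (a - b) * (c x * c y) else 0) = (a - b) * (\<Sum>x\<in>C. (c x)\<^sup>2)"
    using assms(1) by (simp add: power2_eq_square sum_distrib_left)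
  finally show ?thesis
    using integral unfolding square by simp
qed

text \<open>This is \<open>E[G (1 - G)]\<close> for \<open>G = cdf_at D \<psi>\<close>, the mean conditional variance of
  \<open>1{\<psi> Y \<le> \<psi> T}\<close> given \<open>T\<close>.\<close>

definition cdf_variance :: "'a measure \<Rightarrow> ('a \<Rightarrow> real) \<Rightarrow> real" where
  "cdf_variance D \<psi> = enn2real (cdf_mean D \<psi>) - enn2real (cdf_sq_mean D \<psi>)"

lemma cdf_variance_bounds:
  assumes "prob_space D" and [measurable]: "\<psi> \<in> borel_measurable D"
  shows "0 \<le> cdf_variance D \<psi>" and "cdf_variance D \<psi> \<le> 1 / 4"
proof -
  interpret prob_space D by fact
  define G where "G z = enn2real (cdf_at D \<psi> z)" for z
  have cdf_at_eq: "cdf_at D \<psi> z = ennreal (G z)" for z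
    using cdf_at_le_1[OF assms(1), of \<psi> z] by (auto simp: G_def ennreal_enn2real_if top_unique)
  have G_01: "0 \<le> G z" "G z \<le> 1" for z
    using cdf_at_le_1[OF assms(1), of \<psi> z] by (auto simp: G_def enn2real_leI)
  have [measurable]: "G \<in> borel_measurable D"
    unfolding G_def using assms(1) by measurable
  have integrable: "integrable D G" "integrable D (\<lambda>z. (G z)\<^sup>2)"
    using G_01 by (auto intro!: integrable_const_bound[where B = 1] AE_I2 power_le_one)
  have mean: "cdf_mean D \<psi> = ennreal (\<integral>z. G z \<partial>D)"
    unfolding cdf_mean_def cdf_at_eq using integrable G_01 by (intro nn_integral_eq_integral) auto
  have "cdf_sq_mean D \<psi> = (\<integral>\<^sup>+z. ennreal ((G z)\<^sup>2) \<partial>D)"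
    unfolding cdf_sq_mean_def cdf_at_eq using G_01 by (simp add: ennreal_power)
  also have "\<dots> = ennreal (\<integral>z. (G z)\<^sup>2 \<partial>D)"
    using integrable G_01 by (intro nn_integral_eq_integral) auto
  finally have sq_mean: "cdf_sq_mean D \<psi> = ennreal (\<integral>z. (G z)\<^sup>2 \<partial>D)" .
  have "cdf_variance D \<psi> = (\<integral>z. G z \<partial>D) - (\<integral>z. (G z)\<^sup>2 \<partial>D)"
    using mean sq_mean G_01 by (simp add: cdf_variance_def integral_nonneg_AE)
  also have "\<dots> = (\<integral>z. G z * (1 - G z) \<partial>D)"
    using integrable by (simp add: power2_eq_square right_diff_distrib)
  finally have variance: "cdf_variance D \<psi> = (\<integral>z. G z * (1 - G z) \<partial>D)" .
  have bounds: "0 \<le> G z * (1 - G z)" "G z * (1 - G z) \<le> 1 / 4" for z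
    using G_01[of z] zero_le_power2[of "G z - 1 / 2"]
    by (simp_all add: power2_eq_square algebra_simps mult_left_le)
  show "0 \<le> cdf_variance D \<psi>"
    unfolding variance using bounds by (simp add: integral_nonneg_AE)
  have "(\<integral>z. G z * (1 - G z) \<partial>D) \<le> (\<integral>z. 1 / 4 \<partial>D)"
    using integrable bounds
    by (intro integral_mono) (auto simp: right_diff_distrib power2_eq_square)
  then show "cdf_variance D \<psi> \<le> 1 / 4"
    unfolding variance by (simp add: prob_space)
qed

lemma cdf_variance_atomless:
  fixes \<psi> :: "'a \<Rightarrow> real"
  assumes "prob_space D" "\<psi> \<in> borel_measurable D" "\<forall>v. measure (distr D borel \<psi>) {v} = 0"
  shows "cdf_variance D \<psi> = 1 / 6"
  using cdf_mean_atomless[OF assms] cdf_sq_mean_atomless[OF assms] by (simp add: cdf_variance_def)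

lemma has_bochner_integral_ecdf_diff_sq:
  fixes \<psi> :: "'a \<Rightarrow> real"
  assumes "prob_space D" and [measurable]: "\<psi> \<in> borel_measurable D"
    and "finite I" "t \<in> I" "A \<subseteq> I - {t}" "B \<subseteq> I - {t}" "A \<inter> B = {}" "A \<noteq> {}" "B \<noteq> {}"
  shows "has_bochner_integral (PiM I (\<lambda>_. D))
    (\<lambda>\<omega>. (ecdf A (\<lambda>a. \<psi> (\<omega> a)) (\<psi> (\<omega> t)) - ecdf B (\<lambda>a. \<psi> (\<omega> a)) (\<psi> (\<omega> t)))\<^sup>2)
    (cdf_variance D \<psi> * (1 / card A + 1 / card B))"
proof -
  define c where "c x = (if x \<in> A then 1 / card A else - 1 / card B)" for x
  have finite: "finite A" "finite B"
    using assms(3,5,6) by (auto intro: finite_subset)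
  have weighted_sum: "(\<Sum>x\<in>A \<union> B. c x * f x) = (\<Sum>x\<in>A. f x) / card A - (\<Sum>x\<in>B. f x) / card B"
    for f :: "'b \<Rightarrow> real"
  proof -
    have "(\<Sum>x\<in>A \<union> B. c x * f x) = (\<Sum>x\<in>A. f x / card A) + (\<Sum>x\<in>B. - f x / card B)"
      using finite assms(7) by (auto simp: sum.union_disjoint c_def intro!: sum.cong)
    then show ?thesis
      by (simp add: sum_divide_distrib sum_negf)
  qed
  have "(\<Sum>x\<in>A \<union> B. c x) = 0"
    using weighted_sum[of "\<lambda>_. 1"] finite assms(8,9) by simp
  moreover have "(\<Sum>x\<in>A \<union> B. (c x)\<^sup>2) = 1 / card A + 1 / card B"
  proof -
    have "(\<Sum>x\<in>A. c x) = 1"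
      using finite assms(8) by (simp add: c_def)
    moreover have "(\<Sum>x\<in>B. c x) = (\<Sum>x\<in>B. - 1 / card B)"
      using assms(7) by (intro sum.cong) (auto simp: c_def)
    ultimately show ?thesis
      using weighted_sum[of c] finite assms(9) by (simp add: power2_eq_square)
  qed
  moreover have "ecdf A (\<lambda>a. \<psi> (\<omega> a)) (\<psi> (\<omega> t)) - ecdf B (\<lambda>a. \<psi> (\<omega> a)) (\<psi> (\<omega> t))
      = (\<Sum>x\<in>A \<union> B. c x * of_bool (\<psi> (\<omega> x) \<le> \<psi> (\<omega> t)))" for \<omega>
    using weighted_sum[of "\<lambda>x. of_bool (\<psi> (\<omega> x) \<le> \<psi> (\<omega> t))"] by (simp add: ecdf_def of_bool_def)
  moreover have "has_bochner_integral (PiM I (\<lambda>_. D))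
      (\<lambda>\<omega>. (\<Sum>x\<in>A \<union> B. c x * of_bool (\<psi> (\<omega> x) \<le> \<psi> (\<omega> t)))\<^sup>2)
      (enn2real (cdf_sq_mean D \<psi>) * (\<Sum>x\<in>A \<union> B. c x)\<^sup>2
        + (enn2real (cdf_mean D \<psi>) - enn2real (cdf_sq_mean D \<psi>)) * (\<Sum>x\<in>A \<union> B. (c x)\<^sup>2))"
    using finite assms(5,6)
    by (intro has_bochner_integral_square_sum has_bochner_integral_PiM_le_le[OF assms(1-4)]) auto
  ultimately show ?thesis
    by (simp add: cdf_variance_def)
qed

section \<open>The loss of the mechanism\<close>

lemma finite_data_index: "finite (data_index m n)"
proof -
  have "data_index m n = (SIGMA j:{..<m}. {..<n j})"
    by (auto simp: data_index_def)
  then show ?thesis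
    by simp
qed

lemma finite_splits: "finite Ob \<Longrightarrow> finite (splits Ob w)"
  by (rule finite_subset[of _ "Ob \<times> Pow Ob"]) (auto simp: splits_def)

lemma splits_nonempty:
  assumes "finite Ob" "w < card Ob"
  shows "splits Ob w \<noteq> {}"
proof -
  have "Ob \<noteq> {}"
    using assms by auto
  then obtain t where t: "t \<in> Ob"
    by blast
  then have "w \<le> card (Ob - {t})"
    using assms by simp
  then obtain W where "W \<subseteq> Ob - {t}" "card W = w"
    by (rule obtain_subset_with_card_n)
  with t have "(t, W) \<in> splits Ob w"
    by (simp add: splits_def)
  then show ?thesis
    by blast
qed

lemma split_index_sets:
  fixes m i w :: nat and n :: "nat \<Rightarrow> nat"
  defines "Ob \<equiv> others_index m n i"
  assumes "i < m" and "(t, W) \<in> splits Ob w"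
  shows "t \<in> data_index m n"
    and "own_index n i \<union> W \<subseteq> data_index m n - {t}"
    and "Ob - {t} - W \<subseteq> data_index m n - {t}"
    and "(own_index n i \<union> W) \<inter> (Ob - {t} - W) = {}"
    and "card (own_index n i \<union> W) = n i + w"
    and "card (Ob - {t} - W) = card Ob - 1 - w"
proof -
  have split: "t \<in> Ob" "W \<subseteq> Ob - {t}" "card W = w"
    using assms(3) by (auto simp: splits_def)
  have "Ob \<subseteq> data_index m n" "own_index n i \<subseteq> data_index m n" "own_index n i \<inter> Ob = {}"
    using assms(2) by (auto simp: Ob_def others_index_def own_index_def data_index_def)
  then show "t \<in> data_index m n" "own_index n i \<union> W \<subseteq> data_index m n - {t}"
    "Ob - {t} - W \<subseteq> data_index m n - {t}" "(own_index n i \<union> W) \<inter> (Ob - {t} - W) = {}"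
    using split by auto
  have "finite Ob"
    unfolding Ob_def others_index_def using finite_data_index[of m n]
    by (rule finite_subset[rotated]) (auto simp: data_index_def)
  moreover have "card (own_index n i) = n i" "finite (own_index n i)"
  proof -
    have "own_index n i = Pair i ` {..<n i}"
      by (auto simp: own_index_def)
    then show "card (own_index n i) = n i" "finite (own_index n i)"
      by (simp_all add: card_image inj_on_def)
  qed
  moreover have "finite W"
    using split \<open>finite Ob\<close> by (auto intro: finite_subset)
  moreover have "own_index n i \<inter> W = {}"
    using split \<open>own_index n i \<inter> Ob = {}\<close> by blast
  ultimately show "card (own_index n i \<union> W) = n i + w" "card (Ob - {t} - W) = card Ob - 1 - w"
    using split by (simp_all add: card_Un_disjoint card_Diff_subset)
qed

definition mean_cdf_variance :: "'a measure \<Rightarrow> nat \<Rightarrow> (nat \<Rightarrow> 'a \<Rightarrow> real) \<Rightarrow> real" where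
  "mean_cdf_variance D K \<phi> = (\<Sum>k<K. cdf_variance D (\<phi> k)) / K"

lemma has_bochner_integral_loss:
  fixes m i :: nat and n :: "nat \<Rightarrow> nat"
  defines "N \<equiv> card (others_index m n i)"
  assumes "prob_space D" "\<forall>k<K. \<phi> k \<in> borel_measurable D"
    and "i < m" "1 \<le> n i" "w < N - 1" "(t, W) \<in> splits (others_index m n i) w"
  shows "has_bochner_integral (PiM (data_index m n) (\<lambda>_. D)) (\<lambda>\<omega>. loss K \<phi> m n i \<omega> (t, W))
    ((1 / real (n i + w) + 1 / real (N - 1 - w)) * mean_cdf_variance D K \<phi>)"
proof -
  let ?A = "own_index n i \<union> W" and ?B = "others_index m n i - {t} - W"
  note sets = split_index_sets[OF assms(4,7)]
  have "card ?A \<noteq> 0" "card ?B \<noteq> 0"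
    using sets(5,6) assms(5,6) by (simp_all add: N_def)
  then have "?A \<noteq> {}" "?B \<noteq> {}"
    by (metis card.empty)+
  then have "has_bochner_integral (PiM (data_index m n) (\<lambda>_. D))
      (\<lambda>\<omega>. (ecdf ?A (\<lambda>a. \<phi> k (\<omega> a)) (\<phi> k (\<omega> t)) - ecdf ?B (\<lambda>a. \<phi> k (\<omega> a)) (\<phi> k (\<omega> t)))\<^sup>2)
      (cdf_variance D (\<phi> k) * (1 / card ?A + 1 / card ?B))" if "k < K" for k
    using that assms(3)
    by (intro has_bochner_integral_ecdf_diff_sq[OF assms(2) _ finite_data_index sets(1-4)]) auto
  then have "has_bochner_integral (PiM (data_index m n) (\<lambda>_. D)) (\<lambda>\<omega>. loss K \<phi> m n i \<omega> (t, W))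
      (1 / real K * (\<Sum>k<K. cdf_variance D (\<phi> k) * (1 / card ?A + 1 / card ?B)))"
    unfolding loss_def prod.case by (intro has_bochner_integral_mult_right has_bochner_integral_sum) auto
  then show ?thesis
    by (simp add: sets(5,6) mean_cdf_variance_def sum_distrib_right[symmetric] mult_ac N_def)
qed

lemma expected_loss_eq:
  fixes m i :: nat and n s :: "nat \<Rightarrow> nat"
  defines "N \<equiv> card (others_index m n i)"
  assumes "prob_space D" "\<forall>k<K. \<phi> k \<in> borel_measurable D"
    and "i < m" "1 \<le> n i" "s N < N - 1"
  shows "expected_loss D K \<phi> m n s i
    = (1 / real (n i + s N) + 1 / real (N - 1 - s N)) * mean_cdf_variance D K \<phi>"
proof -
  define S where "S = splits (others_index m n i) (s N)"
  define c where "c = (1 / real (n i + s N) + 1 / real (N - 1 - s N)) * mean_cdf_variance D K \<phi>"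
  have "finite (others_index m n i)"
    by (rule finite_subset[OF _ finite_data_index]) (auto simp: others_index_def data_index_def)
  then have "finite S" "S \<noteq> {}"
    unfolding S_def using assms(6) by (simp_all add: finite_splits splits_nonempty N_def)
  moreover have "has_bochner_integral (PiM (data_index m n) (\<lambda>_. D)) (\<lambda>\<omega>. \<Sum>tw\<in>S. loss K \<phi> m n i \<omega> tw)
      (\<Sum>tw\<in>S. c)"
    unfolding S_def c_def N_def
    using has_bochner_integral_loss[where m = m and n = n and i = i, OF assms(2-5)] assms(6)
    by (intro has_bochner_integral_sum) (auto simp: N_def)
  ultimately show ?thesis
    by (simp add: expected_loss_def Let_def S_def N_def c_def has_bochner_integral_integral_eq)
qed

lemma mean_cdf_variance_bounds:
  assumes "prob_space D" "\<forall>k<K. \<phi> k \<in> borel_measurable D"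
  shows "0 \<le> mean_cdf_variance D K \<phi>" and "mean_cdf_variance D K \<phi> \<le> 1 / 4"
proof -
  have "(\<Sum>k<K. cdf_variance D (\<phi> k)) \<le> (\<Sum>k<K. 1 / 4)"
    using assms cdf_variance_bounds(2) by (intro sum_mono) auto
  then show "mean_cdf_variance D K \<phi> \<le> 1 / 4"
    by (cases "K = 0") (auto simp: mean_cdf_variance_def field_simps)
  show "0 \<le> mean_cdf_variance D K \<phi>"
    using assms cdf_variance_bounds(1) by (auto simp: mean_cdf_variance_def intro!: sum_nonneg divide_nonneg_nonneg)
qed

lemma mean_cdf_variance_atomless:
  assumes "prob_space D" "\<forall>k<K. \<phi> k \<in> borel_measurable D" "1 \<le> K" "atomless_features D K \<phi>"
  shows "mean_cdf_variance D K \<phi> = 1 / 6"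
proof -
  have "(\<Sum>k<K. cdf_variance D (\<phi> k)) = (\<Sum>k<K. 1 / 6)"
    using assms by (intro sum.cong refl cdf_variance_atomless) (auto simp: atomless_features_def)
  then show ?thesis
    using assms(3) by (simp add: mean_cdf_variance_def)
qed

lemma measurable_cdf_variance:
  assumes [measurable]: "\<psi> \<in> borel_measurable M"
  shows "(\<lambda>D. cdf_variance D \<psi>) \<in> borel_measurable (subprob_algebra M)"
proof -
  have [measurable]: "(\<lambda>(D, z). cdf_at D \<psi> z) \<in> borel_measurable (subprob_algebra M \<Otimes>\<^sub>M M)"
    unfolding cdf_at_def case_prod_beta
    by (rule nn_integral_measurable_subprob_algebra2[where N = M]) measurable
  have "(\<lambda>D. cdf_mean D \<psi>) \<in> borel_measurable (subprob_algebra M)"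
    "(\<lambda>D. cdf_sq_mean D \<psi>) \<in> borel_measurable (subprob_algebra M)"
    unfolding cdf_mean_def cdf_sq_mean_def
    by (rule nn_integral_measurable_subprob_algebra2[where N = M]; measurable)+
  then show ?thesis
    unfolding cdf_variance_def by measurable
qed

lemma measurable_mean_cdf_variance:
  assumes "\<forall>k<K. \<phi> k \<in> borel_measurable M"
  shows "(\<lambda>D. mean_cdf_variance D K \<phi>) \<in> borel_measurable (prob_algebra M)"
proof -
  have "(\<lambda>D. mean_cdf_variance D K \<phi>) \<in> borel_measurable (subprob_algebra M)"
    unfolding mean_cdf_variance_def using assms
    by (intro borel_measurable_divide borel_measurable_sum measurable_cdf_variance) auto
  then show ?thesis
    unfolding prob_algebra_def by (rule measurable_restrict_space1)
qed

theorem mainTheorem8: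
  fixes M :: "'a measure" and m K i :: nat and n s :: "nat \<Rightarrow> nat"
    and \<phi> :: "nat \<Rightarrow> 'a \<Rightarrow> real"
    and Pi :: "'a measure measure" and F :: "'a measure set"
  defines "N \<equiv> card (others_index m n i)"
  defines "c \<equiv> 1 / real (n i + s N) + 1 / real (N - 1 - s N)"
  assumes "2 \<le> m" and "i < m" and "\<forall>j<m. 1 \<le> n j" and "1 \<le> K"
    and "\<forall>k<K. \<phi> k \<in> borel_measurable M"
    and "s N < N - 1"
    and "prob_space Pi" and "sets Pi = sets (prob_algebra M)"
    and "F \<noteq> {}" and "F \<subseteq> space (prob_algebra M)"
  shows "0 \<le> (\<integral>D. expected_loss D K \<phi> m n s i \<partial>Pi)
       \<and> (\<integral>D. expected_loss D K \<phi> m n s i \<partial>Pi) \<le> c / 4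
       \<and> 0 \<le> (SUP D\<in>F. expected_loss D K \<phi> m n s i)
       \<and> (SUP D\<in>F. expected_loss D K \<phi> m n s i) \<le> c / 4
       \<and> ((AE D in Pi. atomless_features D K \<phi>) \<longrightarrow>
            (\<integral>D. expected_loss D K \<phi> m n s i \<partial>Pi) = c / 6)
       \<and> ((\<forall>D\<in>F. atomless_features D K \<phi>) \<longrightarrow>
            (SUP D\<in>F. expected_loss D K \<phi> m n s i) = c / 6)"
proof -
  let ?E = "\<lambda>D. expected_loss D K \<phi> m n s i"
  interpret Pi: prob_space Pi by fact
  have space_Pi: "space Pi = space (prob_algebra M)"
    using assms(10) by (rule sets_eq_imp_space_eq)
  have model: "prob_space D" "\<forall>k<K. \<phi> k \<in> borel_measurable D" if "D \<in> space (prob_algebra M)" for D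
    using that assms(7) measurable_cong_sets[of D M borel borel] by (auto simp: space_prob_algebra)
  have loss: "?E D = c * mean_cdf_variance D K \<phi>" if "D \<in> space (prob_algebra M)" for D
    using expected_loss_eq[OF model[OF that] assms(4)] assms(4,5,8) by (simp add: c_def N_def)
  have "0 \<le> c"
    by (simp add: c_def)
  then have bounds: "0 \<le> ?E D" "?E D \<le> c / 4" if "D \<in> space (prob_algebra M)" for D
    using loss[OF that] mean_cdf_variance_bounds[OF model[OF that]] mult_left_mono[of _ "1 / 4" c] by auto
  have atomless: "?E D = c / 6" if "D \<in> space (prob_algebra M)" "atomless_features D K \<phi>" for D
    using loss[OF that(1)] mean_cdf_variance_atomless[OF model[OF that(1)] assms(6) that(2)] by simp
  have measurable: "?E \<in> borel_measurable Pi"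
    using measurable_mean_cdf_variance[OF assms(7)]
    by (subst measurable_cong[where g = "\<lambda>D. c * mean_cdf_variance D K \<phi>"])
      (simp_all add: space_Pi loss measurable_cong_sets[OF assms(10) refl])
  then have "integrable Pi ?E"
    using bounds by (intro Pi.integrable_const_bound[where B = "c / 4"]) (auto simp: space_Pi)
  then have "0 \<le> (\<integral>D. ?E D \<partial>Pi)" "(\<integral>D. ?E D \<partial>Pi) \<le> c / 4"
    using bounds by (intro Pi.integral_ge_const Pi.integral_le_const AE_I2; simp add: space_Pi)+
  moreover have "(\<integral>D. ?E D \<partial>Pi) = c / 6" if "AE D in Pi. atomless_features D K \<phi>"
  proof -
    have "AE D in Pi. ?E D = c / 6"
      using that by (rule AE_mp) (intro AE_I2 impI atomless; simp add: space_Pi)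
    then show ?thesis
      using measurable by (subst integral_cong_AE[where g = "\<lambda>_. c / 6"]) (simp_all add: Pi.prob_space)
  qed
  moreover have "bdd_above (?E ` F)"
    using bounds assms(12) by (auto intro!: bdd_aboveI[where M = "c / 4"])
  then have "0 \<le> (SUP D\<in>F. ?E D)"
    using assms(11,12) bounds by (metis all_not_in_conv cSUP_upper order.trans subsetD)
  moreover have "(SUP D\<in>F. ?E D) \<le> c / 4"
    using assms(11,12) bounds by (intro cSUP_least) auto
  moreover have "(SUP D\<in>F. ?E D) = c / 6" if "\<forall>D\<in>F. atomless_features D K \<phi>"
    using that assms(11,12) atomless by (subst SUP_cong[OF refl, where D = "\<lambda>_. c / 6"]) auto
  ultimately show ?thesis
    by blast
qed

end
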